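(* Let $\Lambda=[\lambda_{\min},\lambda_{\max}]$, $F\in C^2(\Lambda)$, let $\lambda_b\in\{\lambda_{\min},\lambda_{\max}\}$ and let $\lambda_0=\lambda_b$, $\lambda_1,\lambda_2$ be the boundary node and the next two grid nodes moving into the interior, with $h_0=|\lambda_1-\lambda_0|$, $h_1=|\lambda_2-\lambda_1|$ and $h=\max(h_0,h_1)$. Let $d_0=\frac{F(\lambda_1)-F(\lambda_0)}{\lambda_1-\lambda_0}$, $d_1=\frac{F(\lambda_2)-F(\lambda_1)}{\lambda_2-\lambda_1}$, and let $m_b$ be the Fritsch–Carlson boundary slope: $m_b=\frac{(2h_0+h_1)d_0-h_0d_1}{h_0+h_1}$ if $d_0d_1>0$ and $m_b=0$ if $d_0d_1\le0$. Then $$|m_b-F'(\lambda_b)|\le C\,h\,\|F''\|_{\infty,\Lambda}$$ for a constant $C$ depending only on mesh regularity.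
   Context: $\|g\|_{\infty,\Lambda}=\sup_{\lambda\in\Lambda}|g(\lambda)|$. "Mesh regularity" refers to bounds on the ratios of neighbouring grid steps. *)

theory Defs
  imports "HOL-Analysis.Analysis"
begin

definition fc_boundary_slope :: "(real \<Rightarrow> real) \<Rightarrow> real \<Rightarrow> real \<Rightarrow> real \<Rightarrow> real" where
  "fc_boundary_slope F l0 l1 l2 =
     (let h0 = \<bar>l1 - l0\<bar>; h1 = \<bar>l2 - l1\<bar>;
          d0 = (F l1 - F l0) / (l1 - l0); d1 = (F l2 - F l1) / (l2 - l1)
      in if d0 * d1 > 0 then ((2*h0 + h1) * d0 - h0 * d1) / (h0 + h1) else 0)"

definition sup_norm_on :: "real set \<Rightarrow> (real \<Rightarrow> real) \<Rightarrow> real" where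
  "sup_norm_on S g = (SUP x\<in>S. \<bar>g x\<bar>)"

end

theory Submission
  imports Defs
begin

text \<open>Both divided differences are values of \<open>F'\<close> at mean-value points \<open>\<xi>\<^sub>0 \<in> [\<lambda>\<^sub>b, \<lambda>\<^sub>1]\<close>
and \<open>\<xi>\<^sub>1 \<in> [\<lambda>\<^sub>1, \<lambda>\<^sub>2]\<close>, and \<open>F'\<close> is Lipschitz with constant \<open>M = \<parallel>F''\<parallel>\<^sub>\<infinity>\<close>. Hence
\<open>|F'(\<lambda>\<^sub>b) - d\<^sub>0| \<le> M h\<^sub>0\<close> and \<open>|d\<^sub>0 - d\<^sub>1| \<le> M (h\<^sub>0 + h\<^sub>1)\<close>. The unlimited slope is
\<open>d\<^sub>0 + h\<^sub>0/(h\<^sub>0+h\<^sub>1) (d\<^sub>0 - d\<^sub>1)\<close>, which is within \<open>2 M h\<close> of \<open>F'(\<lambda>\<^sub>b)\<close>; when the limiter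
returns \<open>0\<close>, the slopes \<open>d\<^sub>0, d\<^sub>1\<close> have opposite signs, so \<open>|d\<^sub>0| \<le> |d\<^sub>0 - d\<^sub>1|\<close> and
\<open>|F'(\<lambda>\<^sub>b)| \<le> 3 M h\<close>. So \<open>C = 3\<close> works for every mesh, regular or not.\<close>

lemma difference_quotient_eq_derivative:
  fixes f f' :: "real \<Rightarrow> real"
  assumes "convex S"
    and deriv: "\<And>x. x \<in> S \<Longrightarrow> (f has_real_derivative f' x) (at x within S)"
    and "a \<in> S" "b \<in> S" "a \<noteq> b"
  shows "\<exists>\<xi>\<in>closed_segment a b. (f b - f a) / (b - a) = f' \<xi>"
proof -
  have ordered: "\<exists>\<xi>\<in>closed_segment u v. (f v - f u) / (v - u) = f' \<xi>"
    if "u \<in> S" "v \<in> S" "u < v" for u v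
  proof -
    have sub: "{u..v} \<subseteq> S"
      using closed_segment_subset[OF that(1,2) \<open>convex S\<close>] \<open>u < v\<close>
      by (simp add: closed_segment_eq_real_ivl)
    have "\<exists>\<xi>\<in>{u<..<v}. f v - f u = f' \<xi> * (v - u)"
    proof (rule mvt_simple[OF \<open>u < v\<close>])
      fix x assume "u \<le> x" "x \<le> v"
      with sub deriv have "(f has_real_derivative f' x) (at x within {u..v})"
        by (meson atLeastAtMost_iff has_field_derivative_subset subsetD)
      then show "(f has_derivative (*) (f' x)) (at x within {u..v})"
        by (simp add: has_field_derivative_def)
    qed
    then show ?thesis
      using \<open>u < v\<close> by (auto simp: closed_segment_eq_real_ivl)
  qed
  show ?thesis
  proof (cases "a < b")
    case True
    then show ?thesis using ordered assms(3,4) by blast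
  next
    case False
    then have "b < a" using \<open>a \<noteq> b\<close> by simp
    then obtain \<xi> where "\<xi> \<in> closed_segment b a" "(f a - f b) / (a - b) = f' \<xi>"
      using ordered assms(3,4) by blast
    then show ?thesis
      by (metis closed_segment_commute minus_diff_eq minus_divide_divide)
  qed
qed

lemma abs_le_sup_norm_on:
  assumes "compact S" "continuous_on S g" "x \<in> S"
  shows "\<bar>g x\<bar> \<le> sup_norm_on S g"
proof -
  have "compact ((\<lambda>x. \<bar>g x\<bar>) ` S)"
    by (intro compact_continuous_image continuous_intros assms)
  then have "bdd_above ((\<lambda>x. \<bar>g x\<bar>) ` S)"
    by (intro bounded_imp_bdd_above compact_imp_bounded)
  then show ?thesis
    unfolding sup_norm_on_def by (rule cSUP_upper[OF \<open>x \<in> S\<close>])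
qed

lemma abs_le_abs_diff_if_mult_nonpos:
  fixes a b :: real
  assumes "a * b \<le> 0"
  shows "\<bar>a\<bar> \<le> \<bar>a - b\<bar>"
  using assms by (cases "a \<ge> 0"; cases "b \<ge> 0") (auto simp: mult_le_0_iff)

lemma limited_slope_error:
  fixes h0 h1 M d0 d1 e :: real
  assumes "h0 > 0" "h1 > 0"
    and err0: "\<bar>e - d0\<bar> \<le> M * h0"
    and err01: "\<bar>d0 - d1\<bar> \<le> M * (h0 + h1)"
  shows "\<bar>(if d0 * d1 > 0 then ((2*h0 + h1) * d0 - h0 * d1) / (h0 + h1) else 0) - e\<bar>
        \<le> 3 * max h0 h1 * M"
proof -
  have "M \<ge> 0"
    using err0 \<open>h0 > 0\<close> by (smt (verit) zero_le_mult_iff)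
  have h0_le: "M * h0 \<le> max h0 h1 * M"
    using \<open>M \<ge> 0\<close> by (simp add: mult.commute mult_left_mono)
  have "M * (h0 + h1) \<le> M * (2 * max h0 h1)"
    using \<open>M \<ge> 0\<close> by (intro mult_left_mono) auto
  then have sum_le: "M * (h0 + h1) \<le> 2 * (max h0 h1 * M)"
    by (simp add: mult_ac)
  have max_nonneg: "max h0 h1 * M \<ge> 0"
    using \<open>M \<ge> 0\<close> \<open>h0 > 0\<close> by simp
  have three: "3 * max h0 h1 * M = 3 * (max h0 h1 * M)"
    by simp
  show ?thesis
  proof (cases "d0 * d1 > 0")
    case True
    define q where "q = h0 / (h0 + h1) * (d0 - d1)"
    have "((2*h0 + h1) * d0 - h0 * d1) / (h0 + h1) = d0 + q"
      using assms(1,2) by (simp add: q_def field_simps)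
    moreover have "\<bar>q\<bar> \<le> M * h0"
    proof -
      have "\<bar>q\<bar> = h0 / (h0 + h1) * \<bar>d0 - d1\<bar>"
        using assms(1,2) by (simp add: q_def abs_mult)
      also have "\<dots> \<le> h0 / (h0 + h1) * (M * (h0 + h1))"
        using assms(1,2) err01 by (intro mult_left_mono) auto
      also have "\<dots> = M * h0"
        using assms(1,2) by simp
      finally show ?thesis .
    qed
    moreover have "\<bar>d0 + q - e\<bar> \<le> \<bar>e - d0\<bar> + \<bar>q\<bar>"
      by arith
    ultimately show ?thesis
      using True err0 h0_le max_nonneg three by simp
  next
    case False
    then have "\<bar>d0\<bar> \<le> \<bar>d0 - d1\<bar>"
      by (intro abs_le_abs_diff_if_mult_nonpos) simp
    moreover have "\<bar>e\<bar> \<le> \<bar>e - d0\<bar> + \<bar>d0\<bar>"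
      using abs_triangle_ineq[of "e - d0" d0] by simp
    ultimately show ?thesis
      using False err0 err01 h0_le sum_le three by simp
  qed
qed

lemma fc_boundary_slope_error_lipschitz:
  fixes F F1 :: "real \<Rightarrow> real"
  assumes "convex S"
    and deriv: "\<And>x. x \<in> S \<Longrightarrow> (F has_real_derivative F1 x) (at x within S)"
    and lipschitz: "\<And>x y. x \<in> S \<Longrightarrow> y \<in> S \<Longrightarrow> \<bar>F1 x - F1 y\<bar> \<le> M * \<bar>x - y\<bar>"
    and nodes: "lb \<in> S" "l1 \<in> S" "l2 \<in> S" "lb \<noteq> l1" "l1 \<noteq> l2"
  shows "\<bar>fc_boundary_slope F lb l1 l2 - F1 lb\<bar> \<le> 3 * max \<bar>l1 - lb\<bar> \<bar>l2 - l1\<bar> * M"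
proof -
  obtain \<xi>0 where \<xi>0: "\<xi>0 \<in> closed_segment lb l1" "(F l1 - F lb) / (l1 - lb) = F1 \<xi>0"
    using difference_quotient_eq_derivative[OF \<open>convex S\<close> deriv nodes(1,2,4)] by blast
  obtain \<xi>1 where \<xi>1: "\<xi>1 \<in> closed_segment l1 l2" "(F l2 - F l1) / (l2 - l1) = F1 \<xi>1"
    using difference_quotient_eq_derivative[OF \<open>convex S\<close> deriv nodes(2,3,5)] by blast
  have in_S: "\<xi>0 \<in> S" "\<xi>1 \<in> S"
    using \<xi>0(1) \<xi>1(1) closed_segment_subset[OF _ _ \<open>convex S\<close>] nodes by blast+
  have "M \<ge> 0"
    using lipschitz[OF nodes(1,2)] nodes(4) by (smt (verit) zero_le_mult_iff)
  have "\<bar>F1 lb - F1 \<xi>0\<bar> \<le> M * \<bar>l1 - lb\<bar>"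
  proof -
    have "\<bar>lb - \<xi>0\<bar> \<le> \<bar>l1 - lb\<bar>"
      using segment_bound(1)[OF \<xi>0(1)] by (simp add: abs_minus_commute)
    then show ?thesis
      using lipschitz[OF nodes(1) in_S(1)] mult_left_mono[OF _ \<open>M \<ge> 0\<close>] by fastforce
  qed
  moreover have "\<bar>F1 \<xi>0 - F1 \<xi>1\<bar> \<le> M * (\<bar>l1 - lb\<bar> + \<bar>l2 - l1\<bar>)"
  proof -
    have "\<bar>\<xi>0 - \<xi>1\<bar> \<le> \<bar>\<xi>0 - l1\<bar> + \<bar>\<xi>1 - l1\<bar>"
      using abs_triangle_ineq4[of "\<xi>0 - l1" "\<xi>1 - l1"] by simp
    also have "\<dots> \<le> \<bar>l1 - lb\<bar> + \<bar>l2 - l1\<bar>"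
      using segment_bound(2)[OF \<xi>0(1)] segment_bound(1)[OF \<xi>1(1)] by simp
    finally show ?thesis
      using lipschitz[OF in_S] mult_left_mono[OF _ \<open>M \<ge> 0\<close>] by fastforce
  qed
  ultimately show ?thesis
    unfolding fc_boundary_slope_def Let_def \<xi>0(2) \<xi>1(2)
    by (intro limited_slope_error) (use nodes in auto)
qed

theorem mainTheorem14:
  fixes \<rho> :: real
  shows "\<exists>C. \<forall>(lmin::real) lmax (F::real\<Rightarrow>real) F1 F2 lb l1 l2.
    lmin < lmax \<longrightarrow>
    (\<forall>x\<in>{lmin..lmax}. (F has_real_derivative F1 x) (at x within {lmin..lmax})) \<longrightarrow>
    (\<forall>x\<in>{lmin..lmax}. (F1 has_real_derivative F2 x) (at x within {lmin..lmax})) \<longrightarrow>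
    continuous_on {lmin..lmax} F2 \<longrightarrow>
    ((lb = lmin \<and> lb < l1 \<and> l1 < l2 \<and> l2 \<le> lmax) \<or>
     (lb = lmax \<and> lb > l1 \<and> l1 > l2 \<and> l2 \<ge> lmin)) \<longrightarrow>
    \<bar>l1 - lb\<bar> \<le> \<rho> * \<bar>l2 - l1\<bar> \<longrightarrow> \<bar>l2 - l1\<bar> \<le> \<rho> * \<bar>l1 - lb\<bar> \<longrightarrow>
    \<bar>fc_boundary_slope F lb l1 l2 - F1 lb\<bar>
      \<le> C * max \<bar>l1 - lb\<bar> \<bar>l2 - l1\<bar> * sup_norm_on {lmin..lmax} F2"
proof (intro exI[of _ 3] allI impI)
  fix lmin lmax :: real and F F1 F2 :: "real \<Rightarrow> real" and lb l1 l2 :: real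
  assume dF: "\<forall>x\<in>{lmin..lmax}. (F has_real_derivative F1 x) (at x within {lmin..lmax})"
    and dF1: "\<forall>x\<in>{lmin..lmax}. (F1 has_real_derivative F2 x) (at x within {lmin..lmax})"
    and cont: "continuous_on {lmin..lmax} F2"
    and nodes: "(lb = lmin \<and> lb < l1 \<and> l1 < l2 \<and> l2 \<le> lmax) \<or>
                (lb = lmax \<and> lb > l1 \<and> l1 > l2 \<and> l2 \<ge> lmin)"
  have "\<bar>F1 x - F1 y\<bar> \<le> sup_norm_on {lmin..lmax} F2 * \<bar>x - y\<bar>"
    if "x \<in> {lmin..lmax}" "y \<in> {lmin..lmax}" for x y
    using field_differentiable_bound[of "{lmin..lmax}" F1 F2, OF _ _ _ that] dF1 cont
      abs_le_sup_norm_on[of "{lmin..lmax}" F2]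
    by simp
  moreover have "lb \<in> {lmin..lmax}" "l1 \<in> {lmin..lmax}" "l2 \<in> {lmin..lmax}" "lb \<noteq> l1" "l1 \<noteq> l2"
    using nodes by auto
  ultimately show "\<bar>fc_boundary_slope F lb l1 l2 - F1 lb\<bar>
      \<le> 3 * max \<bar>l1 - lb\<bar> \<bar>l2 - l1\<bar> * sup_norm_on {lmin..lmax} F2"
    using dF by (intro fc_boundary_slope_error_lipschitz[of "{lmin..lmax}"]) simp_all
qed

end
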